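(* (i) If $\theta\in\mathbb{K}_2$ and $\theta\cdot\zeta_l\neq0$ for some $l\in\Gamma_i^{r_1}$, then $\alpha_\theta>\alpha_i$, where $\alpha_\theta=\max_{j:\theta_j>0}\alpha_j$. (ii) For every $\theta\in\mathbb{K}_2$ with $\Gamma_\theta^+\cup\Gamma_\theta^-\ne\emptyset$, $\gamma_\theta:=\alpha_\theta-\max_{k\in\Gamma_\theta^+\cup\Gamma_\theta^-}\rho_k>r_1$. Consequently $r_2:=\min\{\gamma_\theta:\theta\in\mathbb{K}_2,\ \Gamma_\theta^+\cup\Gamma_\theta^-\neq\emptyset\}$ (when this set is nonempty) satisfies $r_2>r_1$.
   Context: Fix integers $s_0,r_0\ge1$, vectors $\nu_k,\nu'_k\in\mathbb{N}^{s_0}$ ($k=1,\dots,r_0$), $\zeta_k=\nu'_k-\nu_k$, $\alpha\in[0,\infty)^{s_0}$, $\beta\in\mathbb{R}^{r_0}$, $\rho_k=\beta_k+\nu_k\cdot\alpha$. For $\theta\in[0,\infty)^{s_0}$, $\Gamma_\theta^+=\{k:\theta\cdot\zeta_k>0\}$, $\Gamma_\theta^-=\{k:\theta\cdot\zeta_k<0\}$. Let $r_1=\min_i(\alpha_i-\max_{k:\zeta_{ik}\ne0}\rho_k)$ (assumed finite; a maximum over the empty set is $-\infty$) and $\Gamma_i^{r_1}=\{k:r_1+\rho_k=\alpha_i\}$. Let $S_1=\{i:\Gamma_i^{r_1}\ne\emptyset\}$, $\Pi_1$ the coordinate projection onto $\mathrm{span}\{e_i:i\in S_1\}$ ($(\Pi_1x)_i=x_i$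 for $i\in S_1$, $0$ otherwise), and $\mathbb{K}_2=\{\theta\in[0,\infty)^{s_0}:\theta\cdot\Pi_1\zeta_k=0\ \forall k\in\bigcup_i\Gamma_i^{r_1}\}$. *)

theory Defs
  imports Main "HOL.Real"
begin

text \<open>Species indices i range over a finite type 'i (s0 = CARD('i) >= 1),
reaction indices k over a finite type 'k (r0 = CARD('k) >= 1).
Vectors in R^{s0} are functions 'i => real.\<close>

definition dotp :: "('i::finite \<Rightarrow> real) \<Rightarrow> ('i \<Rightarrow> real) \<Rightarrow> real" where
  "dotp x y = (\<Sum>i\<in>UNIV. x i * y i)"

definition zeta :: "('k \<Rightarrow> 'i \<Rightarrow> nat) \<Rightarrow> ('k \<Rightarrow> 'i \<Rightarrow> nat) \<Rightarrow> 'k \<Rightarrow> 'i \<Rightarrow> real" where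
  "zeta nu nu' k i = real (nu' k i) - real (nu k i)"

definition rho :: "('k \<Rightarrow> 'i::finite \<Rightarrow> nat) \<Rightarrow> ('i \<Rightarrow> real) \<Rightarrow> ('k \<Rightarrow> real) \<Rightarrow> 'k \<Rightarrow> real" where
  "rho nu alpha beta k = beta k + dotp (\<lambda>i. real (nu k i)) alpha"

definition Gplus :: "('k \<Rightarrow> 'i::finite \<Rightarrow> nat) \<Rightarrow> ('k \<Rightarrow> 'i \<Rightarrow> nat) \<Rightarrow> ('i \<Rightarrow> real) \<Rightarrow> 'k set" where
  "Gplus nu nu' \<theta> = {k. dotp \<theta> (zeta nu nu' k) > 0}"

definition Gminus :: "('k \<Rightarrow> 'i::finite \<Rightarrow> nat) \<Rightarrow> ('k \<Rightarrow> 'i \<Rightarrow> nat) \<Rightarrow> ('i \<Rightarrow> real) \<Rightarrow> 'k set" where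
  "Gminus nu nu' \<theta> = {k. dotp \<theta> (zeta nu nu' k) < 0}"

text \<open>r1 = min_i (alpha_i - max_{k: zeta_ik ~= 0} rho_k); indices i with no such k
contribute +infinity and are therefore omitted from the minimum.\<close>
definition r1 :: "('k::finite \<Rightarrow> 'i::finite \<Rightarrow> nat) \<Rightarrow> ('k \<Rightarrow> 'i \<Rightarrow> nat) \<Rightarrow> ('i \<Rightarrow> real) \<Rightarrow> ('k \<Rightarrow> real) \<Rightarrow> real" where
  "r1 nu nu' alpha beta =
     Min ((\<lambda>i. alpha i - Max (rho nu alpha beta ` {k. zeta nu nu' k i \<noteq> 0}))
          ` {i. \<exists>k. zeta nu nu' k i \<noteq> 0})"

definition Gamma_r1 :: "('k::finite \<Rightarrow> 'i::finite \<Rightarrow> nat) \<Rightarrow> ('k \<Rightarrow> 'i \<Rightarrow> nat) \<Rightarrow> ('i \<Rightarrow> real) \<Rightarrow> ('k \<Rightarrow> real) \<Rightarrow> 'i \<Rightarrow> 'k set" where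
  "Gamma_r1 nu nu' alpha beta i = {k. r1 nu nu' alpha beta + rho nu alpha beta k = alpha i}"

definition S1 :: "('k::finite \<Rightarrow> 'i::finite \<Rightarrow> nat) \<Rightarrow> ('k \<Rightarrow> 'i \<Rightarrow> nat) \<Rightarrow> ('i \<Rightarrow> real) \<Rightarrow> ('k \<Rightarrow> real) \<Rightarrow> 'i set" where
  "S1 nu nu' alpha beta = {i. Gamma_r1 nu nu' alpha beta i \<noteq> {}}"

definition Pi1 :: "('k::finite \<Rightarrow> 'i::finite \<Rightarrow> nat) \<Rightarrow> ('k \<Rightarrow> 'i \<Rightarrow> nat) \<Rightarrow> ('i \<Rightarrow> real) \<Rightarrow> ('k \<Rightarrow> real) \<Rightarrow> ('i \<Rightarrow> real) \<Rightarrow> 'i \<Rightarrow> real" where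
  "Pi1 nu nu' alpha beta x i = (if i \<in> S1 nu nu' alpha beta then x i else 0)"

definition K2 :: "('k::finite \<Rightarrow> 'i::finite \<Rightarrow> nat) \<Rightarrow> ('k \<Rightarrow> 'i \<Rightarrow> nat) \<Rightarrow> ('i \<Rightarrow> real) \<Rightarrow> ('k \<Rightarrow> real) \<Rightarrow> ('i \<Rightarrow> real) set" where
  "K2 nu nu' alpha beta =
     {\<theta>. (\<forall>i. \<theta> i \<ge> 0) \<and>
          (\<forall>k \<in> (\<Union>i. Gamma_r1 nu nu' alpha beta i).
              dotp \<theta> (Pi1 nu nu' alpha beta (zeta nu nu' k)) = 0)}"

definition alpha_theta :: "('i::finite \<Rightarrow> real) \<Rightarrow> ('i \<Rightarrow> real) \<Rightarrow> real" where
  "alpha_theta alpha \<theta> = Max (alpha ` {j. \<theta> j > 0})"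

definition gamma_theta :: "('k::finite \<Rightarrow> 'i::finite \<Rightarrow> nat) \<Rightarrow> ('k \<Rightarrow> 'i \<Rightarrow> nat) \<Rightarrow> ('i \<Rightarrow> real) \<Rightarrow> ('k \<Rightarrow> real) \<Rightarrow> ('i \<Rightarrow> real) \<Rightarrow> real" where
  "gamma_theta nu nu' alpha beta \<theta> =
     alpha_theta alpha \<theta> - Max (rho nu alpha beta ` (Gplus nu nu' \<theta> \<union> Gminus nu nu' \<theta>))"

end

theory Submission
  imports Defs
begin

(* Everything rests on one inequality: r1 + rho_k <= alpha_j whenever
   zeta_jk <> 0, with equality exactly when k lies in Gamma_j^{r1}; the
   indices j where equality can occur form S1.
   (i)  If l is in Gamma_i^{r1} and theta in K2, the K2 condition kills the
        part of theta.zeta_l carried by S1, so theta.zeta_l <> 0 forces some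
        j outside S1 with theta_j > 0 and zeta_jl <> 0.  There the inequality
        is strict, giving alpha_i = r1 + rho_l < alpha_j <= alpha_theta.
   (ii) For k with theta.zeta_k <> 0 pick j with theta_j > 0, zeta_jk <> 0;
        either the inequality at (j,k) is strict, or k is in Gamma_j^{r1} and
        (i) applies.  Taking k maximising rho over Gamma_theta^+ u Gamma_theta^-
        gives gamma_theta > r1.
   Finally gamma_theta takes only finitely many values (it only depends on
   two finite index sets), so the set defining r2 is finite and its minimum
   is one of the gamma_theta, hence > r1. *)

lemma dotp_nonzero_common_support:
  assumes "dotp x y \<noteq> 0"
  obtains i where "x i \<noteq> 0" and "y i \<noteq> 0"
proof -
  have "\<exists>i. x i * y i \<noteq> 0"
    using assms unfolding dotp_def by (meson sum.neutral)
  then show thesis using that by auto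
qed

lemma dotp_split:
  "dotp x y = dotp x (\<lambda>i. if i \<in> S then y i else 0) + dotp x (\<lambda>i. if i \<in> S then 0 else y i)"
  unfolding dotp_def by (subst sum.distrib[symmetric]) (rule sum.cong, auto)

lemma r1_lower_bound:
  fixes nu nu' :: "'k::finite \<Rightarrow> 'i::finite \<Rightarrow> nat"
  assumes "zeta nu nu' k j \<noteq> 0"
  shows "r1 nu nu' alpha beta + rho nu alpha beta k \<le> alpha j"
proof -
  let ?M = "Max (rho nu alpha beta ` {k. zeta nu nu' k j \<noteq> 0})"
  have "rho nu alpha beta k \<le> ?M" using assms by (intro Max_ge) auto
  moreover have "r1 nu nu' alpha beta \<le> alpha j - ?M"
    unfolding r1_def using assms by (intro Min_le) auto
  ultimately show ?thesis by linarith
qed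

lemma r1_strict_outside_S1:
  fixes nu nu' :: "'k::finite \<Rightarrow> 'i::finite \<Rightarrow> nat"
  assumes "zeta nu nu' k j \<noteq> 0" and "j \<notin> S1 nu nu' alpha beta"
  shows "r1 nu nu' alpha beta + rho nu alpha beta k < alpha j"
proof -
  have "r1 nu nu' alpha beta + rho nu alpha beta k \<noteq> alpha j"
    using assms(2) unfolding S1_def Gamma_r1_def by auto
  with r1_lower_bound[OF assms(1), of alpha beta] show ?thesis by linarith
qed

lemma K2_nonneg:
  "\<theta> \<in> K2 nu nu' alpha beta \<Longrightarrow> \<theta> i \<ge> 0"
  unfolding K2_def by auto

lemma alpha_theta_ge:
  fixes \<theta> :: "'i::finite \<Rightarrow> real"
  assumes "\<theta> j > 0"
  shows "alpha j \<le> alpha_theta alpha \<theta>"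
  unfolding alpha_theta_def using assms by (intro Max_ge) auto

lemma K2_positive_coordinate:
  assumes "\<theta> \<in> K2 nu nu' alpha beta" and "dotp \<theta> z \<noteq> 0"
  obtains j where "\<theta> j > 0" and "z j \<noteq> 0"
proof -
  obtain j where "\<theta> j \<noteq> 0" "z j \<noteq> 0"
    using dotp_nonzero_common_support[OF assms(2)] .
  moreover have "\<theta> j \<ge> 0" using K2_nonneg[OF assms(1)] .
  ultimately show thesis using that by force
qed

text \<open>For l in some Gamma_i^{r1} the S1-part of theta.zeta_l vanishes on K2,
  so a nonzero theta.zeta_l must be carried by a coordinate outside S1.\<close>
lemma K2_charges_outside_S1:
  fixes nu nu' :: "'k::finite \<Rightarrow> 'i::finite \<Rightarrow> nat"
  assumes th: "\<theta> \<in> K2 nu nu' alpha beta" and l: "l \<in> Gamma_r1 nu nu' alpha beta i"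
    and nz: "dotp \<theta> (zeta nu nu' l) \<noteq> 0"
  obtains j where "\<theta> j > 0" and "zeta nu nu' l j \<noteq> 0" and "j \<notin> S1 nu nu' alpha beta"
proof -
  let ?S = "S1 nu nu' alpha beta"
  have "dotp \<theta> (Pi1 nu nu' alpha beta (zeta nu nu' l)) = 0"
    using th l unfolding K2_def by auto
  then have "dotp \<theta> (\<lambda>j. if j \<in> ?S then 0 else zeta nu nu' l j) \<noteq> 0"
    using nz dotp_split[of \<theta> "zeta nu nu' l" ?S] unfolding Pi1_def[abs_def] by simp
  then obtain j where "\<theta> j > 0" "(if j \<in> ?S then 0 else zeta nu nu' l j) \<noteq> 0"
    by (rule K2_positive_coordinate[OF th])
  then show thesis using that by (auto split: if_splits)
qed

lemma alpha_theta_gt: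
  fixes nu nu' :: "'k::finite \<Rightarrow> 'i::finite \<Rightarrow> nat"
  assumes th: "\<theta> \<in> K2 nu nu' alpha beta" and l: "l \<in> Gamma_r1 nu nu' alpha beta i"
    and nz: "dotp \<theta> (zeta nu nu' l) \<noteq> 0"
  shows "alpha_theta alpha \<theta> > alpha i"
proof -
  obtain j where j: "\<theta> j > 0" "zeta nu nu' l j \<noteq> 0" "j \<notin> S1 nu nu' alpha beta"
    using K2_charges_outside_S1[OF th l nz] .
  have "alpha i = r1 nu nu' alpha beta + rho nu alpha beta l"
    using l unfolding Gamma_r1_def by simp
  also have "\<dots> < alpha j" using r1_strict_outside_S1[OF j(2,3)] .
  also have "\<dots> \<le> alpha_theta alpha \<theta>" using alpha_theta_ge[of \<theta> j alpha, OF j(1)] .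
  finally show ?thesis .
qed

lemma rho_below_alpha_theta:
  fixes nu nu' :: "'k::finite \<Rightarrow> 'i::finite \<Rightarrow> nat"
  assumes th: "\<theta> \<in> K2 nu nu' alpha beta" and nz: "dotp \<theta> (zeta nu nu' k) \<noteq> 0"
  shows "r1 nu nu' alpha beta < alpha_theta alpha \<theta> - rho nu alpha beta k"
proof -
  obtain j where j: "\<theta> j > 0" "zeta nu nu' k j \<noteq> 0"
    using K2_positive_coordinate[OF th nz] .
  show ?thesis
  proof (cases "r1 nu nu' alpha beta + rho nu alpha beta k = alpha j")
    case True
    then have "k \<in> Gamma_r1 nu nu' alpha beta j" unfolding Gamma_r1_def by simp
    with alpha_theta_gt[OF th _ nz] True show ?thesis by force
  next
    case False
    with r1_lower_bound[OF j(2), of alpha beta] alpha_theta_ge[of \<theta> j alpha, OF j(1)] show ?thesis by linarith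
  qed
qed

lemma gamma_theta_gt_r1:
  fixes nu nu' :: "'k::finite \<Rightarrow> 'i::finite \<Rightarrow> nat"
  assumes th: "\<theta> \<in> K2 nu nu' alpha beta"
    and ne: "Gplus nu nu' \<theta> \<union> Gminus nu nu' \<theta> \<noteq> {}"
  shows "gamma_theta nu nu' alpha beta \<theta> > r1 nu nu' alpha beta"
proof -
  let ?G = "Gplus nu nu' \<theta> \<union> Gminus nu nu' \<theta>"
  have "Max (rho nu alpha beta ` ?G) \<in> rho nu alpha beta ` ?G"
    using ne by (intro Max_in) auto
  then obtain k where k: "k \<in> ?G" "Max (rho nu alpha beta ` ?G) = rho nu alpha beta k"
    by auto
  have "dotp \<theta> (zeta nu nu' k) \<noteq> 0" using k(1) unfolding Gplus_def Gminus_def by auto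
  from rho_below_alpha_theta[OF th this] k(2) show ?thesis
    unfolding gamma_theta_def by simp
qed

text \<open>gamma_theta only depends on the support of theta and on
  Gamma_theta^+ u Gamma_theta^-, so it takes finitely many values.\<close>
lemma finite_range_gamma_theta:
  fixes nu nu' :: "'k::finite \<Rightarrow> 'i::finite \<Rightarrow> nat"
  shows "finite (range (gamma_theta nu nu' alpha beta))"
proof (rule finite_subset)
  show "range (gamma_theta nu nu' alpha beta)
          \<subseteq> (\<lambda>(A, G). Max (alpha ` A) - Max (rho nu alpha beta ` G)) ` UNIV"
    unfolding gamma_theta_def alpha_theta_def by auto
qed simp

theorem lemma4p4:
  fixes nu nu' :: "'k::finite \<Rightarrow> 'i::finite \<Rightarrow> nat"
    and alpha :: "'i \<Rightarrow> real" and beta :: "'k \<Rightarrow> real"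
  assumes alpha_nonneg: "\<forall>i. alpha i \<ge> 0"
    and r1_finite: "\<exists>i k. zeta nu nu' k i \<noteq> 0"
  shows "(\<forall>\<theta> i l. \<theta> \<in> K2 nu nu' alpha beta \<and> l \<in> Gamma_r1 nu nu' alpha beta i
              \<and> dotp \<theta> (zeta nu nu' l) \<noteq> 0
           \<longrightarrow> alpha_theta alpha \<theta> > alpha i)
       \<and> (\<forall>\<theta> \<in> K2 nu nu' alpha beta. Gplus nu nu' \<theta> \<union> Gminus nu nu' \<theta> \<noteq> {}
           \<longrightarrow> gamma_theta nu nu' alpha beta \<theta> > r1 nu nu' alpha beta)
       \<and> (let S = {gamma_theta nu nu' alpha beta \<theta> | \<theta>.
                     \<theta> \<in> K2 nu nu' alpha beta \<and> Gplus nu nu' \<theta> \<union> Gminus nu nu' \<theta> \<noteq> {}}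
          in S \<noteq> {} \<longrightarrow> finite S \<and> Min S > r1 nu nu' alpha beta)"
proof -
  define S where "S = {gamma_theta nu nu' alpha beta \<theta> | \<theta>.
                     \<theta> \<in> K2 nu nu' alpha beta \<and> Gplus nu nu' \<theta> \<union> Gminus nu nu' \<theta> \<noteq> {}}"
  have fin: "finite S"
    by (rule finite_subset[OF _ finite_range_gamma_theta]) (auto simp: S_def)
  have "\<forall>x\<in>S. x > r1 nu nu' alpha beta"
    unfolding S_def using gamma_theta_gt_r1 by blast
  then have "S \<noteq> {} \<longrightarrow> Min S > r1 nu nu' alpha beta"
    using fin by (simp add: Min_gr_iff)
  with fin alpha_theta_gt gamma_theta_gt_r1 show ?thesis
    unfolding S_def[symmetric] Let_def by blast
qed

end
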